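(* Let $$A=\bigoplus_{i\in I}B(H_{\mathrm{in},i}),\quad B=\bigoplus_{j\in J}B(H_{\mathrm{out},j}),\quad C=\bigoplus_{k\in K}B(K_{\mathrm{in},k}),\quad D=\bigoplus_{l\in L}B(K_{\mathrm{out},l}),$$ and let $\mathcal S:\underline{\mathrm{Hom}}(A,B)\to\underline{\mathrm{Hom}}(C,D)$ be a deterministic supermap. Then there exists a unital completely positive map $\mathcal N:A\to C$ such that, for every positive $X\in\underline{\mathrm{Hom}}(A,B)$, $$\mathrm{Tr}_{\mathrm{out}}\big[\mathcal S(X)\big]=\mathcal N\big(\mathrm{Tr}_{\mathrm{out}}[X]\big).$$ Explicitly: - on the right, $\mathrm{Tr}_{\mathrm{out}}[X]=\big(\sum_{j\in J}\mathrm{Tr}_{H_{\mathrm{out},j}}X_{ji}\big)_{i\in I}\in A$; - on the left, $\mathrm{Tr}_{\mathrm{out}}[\mathcal S(X)]=\big(\sum_{l\in L}\mathrm{Tr}_{K_{\mathrm{out},l}}\mathcal S(X)_{lk}\big)_{k\in K}\in C$.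
   Context: Throughout, all Hilbert spaces are finite-dimensional and nonzero, and all index sets are finite and nonempty. **Multimatrix algebras.** A finite-dimensional $C^*$-algebra is written as $A=\bigoplus_{i\in I}B(H_i)$, with elements $X=(X_i)_{i\in I}$. Its trace is $\mathrm{Tr}(X)=\sum_i\mathrm{Tr}(X_i)$, and $X\ge 0$ means every block is positive semidefinite. **The algebra $\underline{\mathrm{Hom}}$ and (TP).** For $A=\bigoplus_{i\in I}B(H_i)$ and $B=\bigoplus_{j\in J}B(K_j)$, set $$\underline{\mathrm{Hom}}(A,B):=\bigoplus_{(j,i)\in J\times I}B(K_j\otimes H_i).$$ An element $X\in\underline{\mathrm{Hom}}(A,B)$ satisfies **(TP)** if $\sum_{j\in J}\mathrm{Tr}_{K_j}(X_{ji})=1_{H_i}$ for every $i\in I$. These positive (TP) elements are exactly the Choi operators of the channels (CPTP maps) $A\to B$. **Partial trace.** For $X\in\underline{\mathrm{Hom}}(A,B)$, define the partial trace over the output as $\mathrm{Tr}_{\mathrm{out}}[X]:=\big(\sum_{j}\mathrm{Tr}_{K_j}X_{ji}\big)_{i\in I}\in A$. **Deterministic supermaps.** A deterministic supermap is a completely positive linear map $\mathcal S:\underline{\mathrm{Hom}}(A,B)\to\underline{\mathrm{Hom}}(C,D)$ sending every positive element satisfying (TP) to an element satisfying (TP). *)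

theory Defs
  imports Complex_Main "Jordan_Normal_Form.Matrix"
begin

text \<open>A multimatrix algebra (+) over i in I of B(C^(d i)) is described by a finite nonempty
  index set I and a dimension function d (all d i > 0). An element is a family of
  complex matrices X i of size d i x d i, extended by the empty matrix outside I.\<close>

definition mm_carrier :: "'i set \<Rightarrow> ('i \<Rightarrow> nat) \<Rightarrow> ('i \<Rightarrow> complex mat) set" where
  "mm_carrier I d = {X. (\<forall>i\<in>I. X i \<in> carrier_mat (d i) (d i)) \<and> (\<forall>i. i \<notin> I \<longrightarrow> X i = 0\<^sub>m 0 0)}"

definition valid_mm :: "'i set \<Rightarrow> ('i \<Rightarrow> nat) \<Rightarrow> bool" where
  "valid_mm I d \<longleftrightarrow> finite I \<and> I \<noteq> {} \<and> (\<forall>i\<in>I. d i > 0)"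

definition psd_mat :: "nat \<Rightarrow> complex mat \<Rightarrow> bool" where
  "psd_mat n M \<longleftrightarrow> M \<in> carrier_mat n n \<and>
     (\<forall>v \<in> carrier_vec n. Im (scalar_prod (conjugate v) (mult_mat_vec M v)) = 0
                           \<and> Re (scalar_prod (conjugate v) (mult_mat_vec M v)) \<ge> 0)"

definition mm_pos :: "'i set \<Rightarrow> ('i \<Rightarrow> nat) \<Rightarrow> ('i \<Rightarrow> complex mat) \<Rightarrow> bool" where
  "mm_pos I d X \<longleftrightarrow> X \<in> mm_carrier I d \<and> (\<forall>i\<in>I. psd_mat (d i) (X i))"

definition mm_one :: "'i set \<Rightarrow> ('i \<Rightarrow> nat) \<Rightarrow> ('i \<Rightarrow> complex mat)" where
  "mm_one I d = (\<lambda>i. if i \<in> I then 1\<^sub>m (d i) else 0\<^sub>m 0 0)"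

definition mm_linear :: "'i set \<Rightarrow> ('i \<Rightarrow> nat) \<Rightarrow> 'k set \<Rightarrow> ('k \<Rightarrow> nat)
    \<Rightarrow> (('i \<Rightarrow> complex mat) \<Rightarrow> ('k \<Rightarrow> complex mat)) \<Rightarrow> bool" where
  "mm_linear I d K e \<Phi> \<longleftrightarrow>
     (\<forall>X \<in> mm_carrier I d. \<Phi> X \<in> mm_carrier K e) \<and>
     (\<forall>X \<in> mm_carrier I d. \<forall>Y \<in> mm_carrier I d. \<Phi> (\<lambda>i. X i + Y i) = (\<lambda>k. \<Phi> X k + \<Phi> Y k)) \<and>
     (\<forall>X \<in> mm_carrier I d. \<forall>c::complex. \<Phi> (\<lambda>i. c \<cdot>\<^sub>m X i) = (\<lambda>k. c \<cdot>\<^sub>m \<Phi> X k))"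

text \<open>Amplification M_n(A) -> M_n(C): the block (i) of an element of M_n(A) is a matrix on
  C^n (x) C^(d i), index p * d i + a; the (p,q) entry of X in M_n(A) is the family of blocks.\<close>
definition blk :: "nat \<Rightarrow> complex mat \<Rightarrow> nat \<Rightarrow> nat \<Rightarrow> complex mat" where
  "blk m M p q = mat m m (\<lambda>(a,b). M $$ (p*m+a, q*m+b))"

definition assemble :: "nat \<Rightarrow> nat \<Rightarrow> (nat \<Rightarrow> nat \<Rightarrow> complex mat) \<Rightarrow> complex mat" where
  "assemble n m F = mat (n*m) (n*m) (\<lambda>(r,s). F (r div m) (s div m) $$ (r mod m, s mod m))"

definition amplify :: "nat \<Rightarrow> 'i set \<Rightarrow> ('i \<Rightarrow> nat) \<Rightarrow> 'k set \<Rightarrow> ('k \<Rightarrow> nat)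
    \<Rightarrow> (('i \<Rightarrow> complex mat) \<Rightarrow> ('k \<Rightarrow> complex mat))
    \<Rightarrow> ('i \<Rightarrow> complex mat) \<Rightarrow> ('k \<Rightarrow> complex mat)" where
  "amplify n I d K e \<Phi> X = (\<lambda>k. if k \<in> K then
      assemble n (e k) (\<lambda>p q. \<Phi> (\<lambda>i. if i \<in> I then blk (d i) (X i) p q else 0\<^sub>m 0 0) k)
    else 0\<^sub>m 0 0)"

definition mm_cp :: "'i set \<Rightarrow> ('i \<Rightarrow> nat) \<Rightarrow> 'k set \<Rightarrow> ('k \<Rightarrow> nat)
    \<Rightarrow> (('i \<Rightarrow> complex mat) \<Rightarrow> ('k \<Rightarrow> complex mat)) \<Rightarrow> bool" where
  "mm_cp I d K e \<Phi> \<longleftrightarrow> mm_linear I d K e \<Phi> \<and>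
     (\<forall>n>0. \<forall>X. mm_pos I (\<lambda>i. n * d i) X \<longrightarrow> mm_pos K (\<lambda>k. n * e k) (amplify n I d K e \<Phi> X))"

text \<open>Hom(A,B) = (+) over (j,i) in J x I of B(K_j (x) H_i); tensor index a * dim H_i + b.\<close>
definition hom_dim :: "('i \<Rightarrow> nat) \<Rightarrow> ('j \<Rightarrow> nat) \<Rightarrow> ('j \<times> 'i \<Rightarrow> nat)" where
  "hom_dim d e = (\<lambda>(j,i). e j * d i)"

definition tr_out :: "'i set \<Rightarrow> ('i \<Rightarrow> nat) \<Rightarrow> 'j set \<Rightarrow> ('j \<Rightarrow> nat)
    \<Rightarrow> ('j \<times> 'i \<Rightarrow> complex mat) \<Rightarrow> ('i \<Rightarrow> complex mat)" where
  "tr_out I d J e X = (\<lambda>i. if i \<in> I then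
      mat (d i) (d i) (\<lambda>(b,b'). \<Sum>j\<in>J. \<Sum>a<e j. X (j,i) $$ (a * d i + b, a * d i + b'))
    else 0\<^sub>m 0 0)"

definition is_TP :: "'i set \<Rightarrow> ('i \<Rightarrow> nat) \<Rightarrow> 'j set \<Rightarrow> ('j \<Rightarrow> nat)
    \<Rightarrow> ('j \<times> 'i \<Rightarrow> complex mat) \<Rightarrow> bool" where
  "is_TP I d J e X \<longleftrightarrow> tr_out I d J e X = mm_one I d"

definition deterministic_supermap ::
  "'i set \<Rightarrow> ('i \<Rightarrow> nat) \<Rightarrow> 'j set \<Rightarrow> ('j \<Rightarrow> nat)
   \<Rightarrow> 'k set \<Rightarrow> ('k \<Rightarrow> nat) \<Rightarrow> 'l set \<Rightarrow> ('l \<Rightarrow> nat)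
   \<Rightarrow> (('j \<times> 'i \<Rightarrow> complex mat) \<Rightarrow> ('l \<times> 'k \<Rightarrow> complex mat)) \<Rightarrow> bool" where
  "deterministic_supermap I dI J dJ K dK L dL S \<longleftrightarrow>
     mm_cp (J \<times> I) (hom_dim dI dJ) (L \<times> K) (hom_dim dK dL) S \<and>
     (\<forall>X. mm_pos (J \<times> I) (hom_dim dI dJ) X \<and> is_TP I dI J dJ X \<longrightarrow> is_TP K dK L dL (S X))"

end

theory Submission
  imports Defs
begin

text \<open>Let \<open>E\<close> be the embedding \<open>X \<mapsto> 1\<^sub>B / dim B \<otimes> X\<close> of \<open>A\<close> into
  \<open>Hom(A, B)\<close>; it is completely positive and \<open>Tr\<^sub>o\<^sub>u\<^sub>t \<circ> E = id\<close>. Put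
  \<open>N = Tr\<^sub>o\<^sub>u\<^sub>t \<circ> S \<circ> E\<close>: it is completely positive as a composite of completely
  positive maps, and unital because \<open>E 1\<close> is a channel. The linear map
  \<open>T = Tr\<^sub>o\<^sub>u\<^sub>t \<circ> S\<close> equals \<open>1\<close> on every channel. If \<open>H\<close> is Hermitian with
  \<open>Tr\<^sub>o\<^sub>u\<^sub>t H = 0\<close>, then \<open>E 1 + \<epsilon> H\<close> is still a channel for small \<open>\<epsilon> > 0\<close>,
  so \<open>T H = 0\<close>; splitting into Hermitian parts, \<open>T\<close> vanishes on the kernel of
  \<open>Tr\<^sub>o\<^sub>u\<^sub>t\<close>. As \<open>X - E (Tr\<^sub>o\<^sub>u\<^sub>t X)\<close> lies in that kernel,
  \<open>T X = N (Tr\<^sub>o\<^sub>u\<^sub>t X)\<close>.\<close>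

section \<open>Positive matrices\<close>

definition qform :: "nat \<Rightarrow> complex mat \<Rightarrow> complex vec \<Rightarrow> complex" where
  "qform n M v = (\<Sum>r<n. \<Sum>s<n. cnj (v $ r) * M $$ (r, s) * v $ s)"

lemma scalar_prod_conjugate_mult_mat_vec:
  assumes "M \<in> carrier_mat n n" "v \<in> carrier_vec n"
  shows "scalar_prod (conjugate v) (M *\<^sub>v v) = qform n M v"
proof -
  have "scalar_prod (conjugate v) (M *\<^sub>v v) = (\<Sum>r<n. cnj (v $ r) * (\<Sum>s<n. M $$ (r, s) * v $ s))"
    using assms unfolding scalar_prod_def
    by (auto simp: mult_mat_vec_def row_def atLeast0LessThan scalar_prod_def intro!: sum.cong)
  then show ?thesis
    unfolding qform_def by (simp add: sum_distrib_left mult.assoc)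
qed

lemma psd_mat_iff_qform:
  "psd_mat n M \<longleftrightarrow> M \<in> carrier_mat n n \<and> (\<forall>v \<in> carrier_vec n. 0 \<le> qform n M v)"
  unfolding psd_mat_def less_eq_complex_def
  using scalar_prod_conjugate_mult_mat_vec by auto

lemma qform_pushforward:
  fixes f :: "nat \<Rightarrow> nat" and m n :: nat
  assumes "\<And>r. r < m \<Longrightarrow> f r < n"
  shows "(\<Sum>r<m. \<Sum>s<m. cnj (x r) * M $$ (f r, f s) * x s)
       = qform n M (vec n (\<lambda>y. \<Sum>r \<in> {r \<in> {..<m}. f r = y}. x r))"
proof -
  let ?F = "\<lambda>y. {r \<in> {..<m}. f r = y}"
  have fibres: "(\<Sum>y<n. sum g (?F y)) = sum g {..<m}" for g :: "nat \<Rightarrow> complex"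
    using assms by (intro sum.group) auto
  have "qform n M (vec n (\<lambda>y. \<Sum>r \<in> ?F y. x r))
      = (\<Sum>y<n. \<Sum>y'<n. \<Sum>r \<in> ?F y. \<Sum>s \<in> ?F y'. cnj (x r) * M $$ (y, y') * x s)"
    unfolding qform_def
    by (intro sum.cong refl) (simp only: sum_product[symmetric] sum_distrib_right[symmetric], simp add: cnj_sum)
  also have "\<dots> = (\<Sum>y<n. \<Sum>r \<in> ?F y. \<Sum>y'<n. \<Sum>s \<in> ?F y'. cnj (x r) * M $$ (y, y') * x s)"
    by (rule sum.cong[OF refl], rule sum.swap)
  also have "\<dots> = (\<Sum>y<n. \<Sum>r \<in> ?F y. \<Sum>y'<n. \<Sum>s \<in> ?F y'. cnj (x r) * M $$ (f r, f s) * x s)"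
    by (intro sum.cong refl) auto
  also have "\<dots> = (\<Sum>r<m. \<Sum>s<m. cnj (x r) * M $$ (f r, f s) * x s)"
    by (simp only: fibres)
  finally show ?thesis ..
qed

text \<open>Kraus form \<open>\<Sum>\<^sub>a V\<^sub>a\<^sup>* M\<^sub>a V\<^sub>a\<close>, where each \<open>V\<^sub>a\<close> sends the basis vector \<open>r\<close>
  to \<open>w a r\<close> times the basis vector \<open>f a r\<close>.\<close>
lemma psd_mat_kraus_sum:
  fixes w :: "'a \<Rightarrow> nat \<Rightarrow> complex"
  assumes "finite A" and M': "M' \<in> carrier_mat m m"
    and M'_eq: "\<And>r s. r < m \<Longrightarrow> s < m \<Longrightarrow>
      M' $$ (r, s) = (\<Sum>a\<in>A. cnj (w a r) * M a $$ (f a r, f a s) * w a s)"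
    and psd: "\<And>a. a \<in> A \<Longrightarrow> psd_mat (n a) (M a)"
    and f: "\<And>a r. a \<in> A \<Longrightarrow> r < m \<Longrightarrow> f a r < n a"
  shows "psd_mat m M'"
  unfolding psd_mat_iff_qform
proof (intro conjI ballI M')
  fix v :: "complex vec"
  define u where "u a = vec (n a) (\<lambda>y. \<Sum>r \<in> {r \<in> {..<m}. f a r = y}. w a r * v $ r)" for a
  have "qform m M' v = (\<Sum>a\<in>A. \<Sum>r<m. \<Sum>s<m. cnj (w a r * v $ r) * M a $$ (f a r, f a s) * (w a s * v $ s))"
    unfolding qform_def
    by (simp add: M'_eq sum_distrib_left sum_distrib_right sum.swap[of _ A] mult_ac)
  also have "\<dots> = (\<Sum>a\<in>A. qform (n a) (M a) (u a))"
    unfolding u_def using f by (intro sum.cong refl qform_pushforward) auto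
  finally show "0 \<le> qform m M' v"
    using psd by (auto simp: psd_mat_iff_qform u_def intro!: sum_nonneg)
qed

lemma qform_hermitian_real:
  assumes "\<And>r s. r < n \<Longrightarrow> s < n \<Longrightarrow> H $$ (r, s) = cnj (H $$ (s, r))"
  shows "Im (qform n H v) = 0"
proof -
  have "cnj (qform n H v) = (\<Sum>r<n. \<Sum>s<n. v $ r * H $$ (s, r) * cnj (v $ s))"
    unfolding qform_def cnj_sum by (intro sum.cong refl) (simp add: assms[symmetric])
  also have "\<dots> = qform n H v"
    unfolding qform_def by (subst sum.swap) (simp add: mult_ac)
  finally show ?thesis
    by (metis Reals_cnj_iff complex_is_Real_iff)
qed

lemma norm_qform_le:
  "cmod (qform n H v) \<le> (\<Sum>r<n. \<Sum>s<n. cmod (H $$ (r, s))) * (\<Sum>t<n. (cmod (v $ t))\<^sup>2)"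
proof -
  let ?v2 = "\<Sum>t<n. (cmod (v $ t))\<^sup>2"
  have entry: "(cmod (v $ t))\<^sup>2 \<le> ?v2" if "t < n" for t
    using that by (intro member_le_sum) auto
  have prod: "cmod (v $ r) * cmod (v $ s) \<le> ?v2" if "r < n" "s < n" for r s
  proof -
    have "cmod (v $ r) * cmod (v $ s) \<le> max ((cmod (v $ r))\<^sup>2) ((cmod (v $ s))\<^sup>2)"
      by (smt (verit, best) norm_ge_zero power2_eq_square mult_mono mult_left_mono)
    then show ?thesis
      using entry[OF \<open>r < n\<close>] entry[OF \<open>s < n\<close>] by linarith
  qed
  have "cmod (qform n H v) \<le> (\<Sum>r<n. \<Sum>s<n. cmod (H $$ (r, s)) * (cmod (v $ r) * cmod (v $ s)))"
    unfolding qform_def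
    by (rule order.trans[OF norm_sum sum_mono], rule order.trans[OF norm_sum sum_mono])
       (simp add: norm_mult mult_ac)
  also have "\<dots> \<le> (\<Sum>r<n. \<Sum>s<n. cmod (H $$ (r, s)) * ?v2)"
    using prod by (intro sum_mono mult_left_mono) auto
  finally show ?thesis
    by (simp add: sum_distrib_right)
qed

lemma psd_mat_scalar_plus_hermitian:
  fixes c e :: real
  assumes M: "M \<in> carrier_mat n n"
    and M_eq: "\<And>r s. r < n \<Longrightarrow> s < n \<Longrightarrow> M $$ (r, s) = (if r = s then of_real c else 0) + of_real e * H $$ (r, s)"
    and herm: "\<And>r s. r < n \<Longrightarrow> s < n \<Longrightarrow> H $$ (r, s) = cnj (H $$ (s, r))"
    and "0 \<le> e" and small: "e * (\<Sum>r<n. \<Sum>s<n. cmod (H $$ (r, s))) \<le> c"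
  shows "psd_mat n M"
  unfolding psd_mat_iff_qform
proof (intro conjI ballI M)
  fix v :: "complex vec"
  define v2 where "v2 = (\<Sum>t<n. (cmod (v $ t))\<^sup>2)"
  have "0 \<le> v2"
    unfolding v2_def by (intro sum_nonneg) auto
  have diag: "(\<Sum>r<n. cnj (v $ r) * v $ r) = of_real v2"
    unfolding v2_def of_real_sum by (intro sum.cong refl) (metis complex_norm_square mult.commute of_real_power)
  have "qform n M v = (\<Sum>r<n. \<Sum>s<n. (if r = s then of_real c * (cnj (v $ r) * v $ s) else 0)
      + of_real e * (cnj (v $ r) * H $$ (r, s) * v $ s))"
    unfolding qform_def by (intro sum.cong refl) (simp add: M_eq algebra_simps)
  also have "\<dots> = of_real c * (\<Sum>r<n. cnj (v $ r) * v $ r) + of_real e * qform n H v"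
    unfolding qform_def by (simp add: sum.distrib sum_distrib_left mult.assoc)
  also have "\<dots> = of_real (c * v2 + e * Re (qform n H v))"
    using qform_hermitian_real[OF herm, where v=v] by (simp add: diag complex_eq_iff)
  finally have q: "qform n M v = of_real (c * v2 + e * Re (qform n H v))" .
  have "e * \<bar>Re (qform n H v)\<bar> \<le> e * ((\<Sum>r<n. \<Sum>s<n. cmod (H $$ (r, s))) * v2)"
    using norm_qform_le[where n=n and H=H and v=v] abs_Re_le_cmod[of "qform n H v"] \<open>0 \<le> e\<close>
    unfolding v2_def by (intro mult_left_mono) auto
  also have "\<dots> \<le> c * v2"
    using small \<open>0 \<le> v2\<close> by (simp add: mult.assoc[symmetric] mult_right_mono)
  finally have "e * \<bar>Re (qform n H v)\<bar> \<le> c * v2" .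
  moreover have "- (e * Re (qform n H v)) \<le> e * \<bar>Re (qform n H v)\<bar>"
    using mult_left_mono[OF abs_ge_minus_self \<open>0 \<le> e\<close>] by simp
  ultimately show "0 \<le> qform n M v"
    unfolding q by (simp add: less_eq_complex_def)
qed

section \<open>Multimatrix algebras\<close>

lemma mult_add_less_mult:
  fixes a b d e :: nat
  assumes "b < d" "a < e"
  shows "a * d + b < e * d"
proof -
  have "a * d + b < Suc a * d"
    using assms(1) by simp
  also have "\<dots> \<le> e * d"
    using assms(2) by (intro mult_right_mono) auto
  finally show ?thesis .
qed

definition mm_zero :: "'i set \<Rightarrow> ('i \<Rightarrow> nat) \<Rightarrow> 'i \<Rightarrow> complex mat" where
  "mm_zero I d = (\<lambda>i. if i \<in> I then 0\<^sub>m (d i) (d i) else 0\<^sub>m 0 0)"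

lemma mm_carrier_eqI:
  assumes "X \<in> mm_carrier I d" "Y \<in> mm_carrier I d"
    and "\<And>i r s. i \<in> I \<Longrightarrow> r < d i \<Longrightarrow> s < d i \<Longrightarrow> X i $$ (r, s) = Y i $$ (r, s)"
  shows "X = Y"
proof
  fix i show "X i = Y i"
  proof (cases "i \<in> I")
    case True
    then have "X i \<in> carrier_mat (d i) (d i)" "Y i \<in> carrier_mat (d i) (d i)"
      using assms(1,2) unfolding mm_carrier_def by auto
    then show ?thesis
      using assms(3)[OF True] by (intro eq_matI) auto
  qed (use assms(1,2) in \<open>auto simp: mm_carrier_def\<close>)
qed

lemma mm_carrier_add: "X \<in> mm_carrier I d \<Longrightarrow> Y \<in> mm_carrier I d \<Longrightarrow> (\<lambda>i. X i + Y i) \<in> mm_carrier I d"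
  unfolding mm_carrier_def by auto

lemma mm_carrier_smult: "X \<in> mm_carrier I d \<Longrightarrow> (\<lambda>i. c \<cdot>\<^sub>m X i) \<in> mm_carrier I d"
  unfolding mm_carrier_def by auto

lemma mm_zero_carrier: "mm_zero I d \<in> mm_carrier I d"
  unfolding mm_zero_def mm_carrier_def by auto

lemma mm_one_carrier: "mm_one I d \<in> mm_carrier I d"
  unfolding mm_one_def mm_carrier_def by auto

lemma hom_dim_Pair [simp]: "hom_dim d e (j, i) = e j * d i"
  by (simp add: hom_dim_def)

lemma mm_carrier_block: "X \<in> mm_carrier I d \<Longrightarrow> i \<in> I \<Longrightarrow> X i \<in> carrier_mat (d i) (d i)"
  unfolding mm_carrier_def by auto

lemma mm_pos_block: "mm_pos I d X \<Longrightarrow> i \<in> I \<Longrightarrow> psd_mat (d i) (X i)"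
  unfolding mm_pos_def by auto

lemma mm_carrier_hom_block:
  "X \<in> mm_carrier (J \<times> I) (hom_dim d e) \<Longrightarrow> j \<in> J \<Longrightarrow> i \<in> I \<Longrightarrow> X (j, i) \<in> carrier_mat (e j * d i) (e j * d i)"
  using mm_carrier_block[of X "J \<times> I" "hom_dim d e" "(j, i)"] by simp

lemma mm_carrier_smult_cancel:
  assumes "A \<in> mm_carrier K f" "B \<in> mm_carrier K f" "c \<noteq> 0" "(\<lambda>k. A k + c \<cdot>\<^sub>m B k) = A"
  shows "B = mm_zero K f"
proof (rule mm_carrier_eqI[OF assms(2) mm_zero_carrier])
  fix k r s assume k: "k \<in> K" "r < f k" "s < f k"
  have "(A k + c \<cdot>\<^sub>m B k) $$ (r, s) = A k $$ (r, s)"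
    using assms(4) by (simp add: fun_eq_iff)
  then show "B k $$ (r, s) = mm_zero K f k $$ (r, s)"
    using k assms(3) mm_carrier_block[OF assms(1) k(1)] mm_carrier_block[OF assms(2) k(1)]
    by (simp add: mm_zero_def)
qed

lemma mm_carrier_add_neg_self:
  assumes "A \<in> mm_carrier K f"
  shows "(\<lambda>k. A k + (-1) \<cdot>\<^sub>m A k) = mm_zero K f"
proof (rule mm_carrier_eqI[OF mm_carrier_add[OF assms mm_carrier_smult[OF assms]] mm_zero_carrier])
  fix k r s assume k: "k \<in> K" "r < f k" "s < f k"
  then show "(A k + (-1) \<cdot>\<^sub>m A k) $$ (r, s) = mm_zero K f k $$ (r, s)"
    using mm_carrier_block[OF assms k(1)] by (simp add: mm_zero_def)
qed

lemma mm_carrier_eq_of_diff: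
  assumes "A \<in> mm_carrier K f" "B \<in> mm_carrier K f" "(\<lambda>k. A k + (-1) \<cdot>\<^sub>m B k) = mm_zero K f"
  shows "A = B"
proof (rule mm_carrier_eqI[OF assms(1,2)])
  fix k r s assume k: "k \<in> K" "r < f k" "s < f k"
  have "(A k + (-1) \<cdot>\<^sub>m B k) $$ (r, s) = 0"
    using assms(3) k by (simp add: fun_eq_iff mm_zero_def)
  then show "A k $$ (r, s) = B k $$ (r, s)"
    using k mm_carrier_block[OF assms(1) k(1)] mm_carrier_block[OF assms(2) k(1)] by simp
qed

lemma mm_one_pos: "mm_pos I d (mm_one I d)"
  unfolding mm_pos_def
proof (intro conjI ballI mm_one_carrier)
  fix i assume "i \<in> I"
  show "psd_mat (d i) (mm_one I d i)"
    by (rule psd_mat_scalar_plus_hermitian[where c = 1 and e = 0 and H = "0\<^sub>m (d i) (d i)"])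
      (use \<open>i \<in> I\<close> in \<open>simp_all add: mm_one_def\<close>)
qed

definition mm_hermitian :: "'i set \<Rightarrow> ('i \<Rightarrow> nat) \<Rightarrow> ('i \<Rightarrow> complex mat) \<Rightarrow> bool" where
  "mm_hermitian I d H \<longleftrightarrow> (\<forall>i\<in>I. \<forall>r<d i. \<forall>s<d i. H i $$ (r, s) = cnj (H i $$ (s, r)))"

definition mm_adjoint :: "'i set \<Rightarrow> ('i \<Rightarrow> nat) \<Rightarrow> ('i \<Rightarrow> complex mat) \<Rightarrow> 'i \<Rightarrow> complex mat" where
  "mm_adjoint I d X = (\<lambda>i. if i \<in> I then mat (d i) (d i) (\<lambda>(r, s). cnj (X i $$ (s, r))) else 0\<^sub>m 0 0)"

lemma mm_adjoint_carrier: "mm_adjoint I d X \<in> mm_carrier I d"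
  unfolding mm_adjoint_def mm_carrier_def by auto

definition mm_re_part :: "'i set \<Rightarrow> ('i \<Rightarrow> nat) \<Rightarrow> ('i \<Rightarrow> complex mat) \<Rightarrow> 'i \<Rightarrow> complex mat" where
  "mm_re_part I d X = (\<lambda>i. (1 / 2) \<cdot>\<^sub>m (X i + mm_adjoint I d X i))"

definition mm_im_part :: "'i set \<Rightarrow> ('i \<Rightarrow> nat) \<Rightarrow> ('i \<Rightarrow> complex mat) \<Rightarrow> 'i \<Rightarrow> complex mat" where
  "mm_im_part I d X = (\<lambda>i. (- \<i> / 2) \<cdot>\<^sub>m (X i + (-1) \<cdot>\<^sub>m mm_adjoint I d X i))"

lemma mm_re_im_part_carrier:
  assumes "X \<in> mm_carrier I d"
  shows "mm_re_part I d X \<in> mm_carrier I d" "mm_im_part I d X \<in> mm_carrier I d"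
  unfolding mm_re_part_def mm_im_part_def
  by (intro mm_carrier_smult mm_carrier_add assms mm_adjoint_carrier)+

lemma mm_re_im_part_index:
  assumes "X \<in> mm_carrier I d" "i \<in> I" "r < d i" "s < d i"
  shows "mm_re_part I d X i $$ (r, s) = (X i $$ (r, s) + cnj (X i $$ (s, r))) / 2"
    and "mm_im_part I d X i $$ (r, s) = - \<i> * (X i $$ (r, s) - cnj (X i $$ (s, r))) / 2"
  using mm_carrier_block[OF assms(1,2)] assms(2-)
  by (simp_all add: mm_re_part_def mm_im_part_def mm_adjoint_def)

lemma mm_hermitian_re_im_part:
  assumes "X \<in> mm_carrier I d"
  shows "mm_hermitian I d (mm_re_part I d X)" "mm_hermitian I d (mm_im_part I d X)"
  unfolding mm_hermitian_def by (simp_all add: mm_re_im_part_index[OF assms] algebra_simps)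

lemma mm_re_plus_im_part:
  assumes X: "X \<in> mm_carrier I d"
  shows "(\<lambda>i. mm_re_part I d X i + \<i> \<cdot>\<^sub>m mm_im_part I d X i) = X"
proof (rule mm_carrier_eqI[OF mm_carrier_add[OF mm_re_im_part_carrier(1)[OF X]
      mm_carrier_smult[OF mm_re_im_part_carrier(2)[OF X]]] X])
  fix i r s assume rs: "i \<in> I" "r < d i" "s < d i"
  have "(a + b) / 2 + \<i> * (- \<i> * (a - b) / 2) = a" for a b :: complex
    by (simp add: field_simps)
  then show "(mm_re_part I d X i + \<i> \<cdot>\<^sub>m mm_im_part I d X i) $$ (r, s) = X i $$ (r, s)"
    using rs carrier_matD[OF mm_carrier_block[OF mm_re_im_part_carrier(2)[OF X] rs(1)]]
    by (simp add: mm_re_im_part_index[OF X rs])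
qed

lemma mm_linearD:
  assumes "mm_linear I d K e \<Phi>" "X \<in> mm_carrier I d"
  shows mm_linear_carrier: "\<Phi> X \<in> mm_carrier K e"
    and mm_linear_add: "Y \<in> mm_carrier I d \<Longrightarrow> \<Phi> (\<lambda>i. X i + Y i) = (\<lambda>k. \<Phi> X k + \<Phi> Y k)"
    and mm_linear_smult: "\<Phi> (\<lambda>i. c \<cdot>\<^sub>m X i) = (\<lambda>k. c \<cdot>\<^sub>m \<Phi> X k)"
  using assms unfolding mm_linear_def by auto

lemma mm_linear_comp:
  "mm_linear I d M f \<Psi> \<Longrightarrow> mm_linear M f K e \<Phi> \<Longrightarrow> mm_linear I d K e (\<Phi> \<circ> \<Psi>)"
  unfolding mm_linear_def by auto

lemma mm_linear_zero_add:
  assumes "mm_linear I d K e \<Phi>" "A \<in> mm_carrier I d" "B \<in> mm_carrier I d"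
    and "\<Phi> A = mm_zero K e" "\<Phi> B = mm_zero K e"
  shows "\<Phi> (\<lambda>i. A i + B i) = mm_zero K e"
  unfolding mm_linear_add[OF assms(1-3)] assms(4,5)
  by (rule mm_carrier_eqI[OF mm_carrier_add[OF mm_zero_carrier mm_zero_carrier] mm_zero_carrier])
    (simp add: mm_zero_def)

lemma mm_linear_zero_smult:
  assumes "mm_linear I d K e \<Phi>" "A \<in> mm_carrier I d" "\<Phi> A = mm_zero K e"
  shows "\<Phi> (\<lambda>i. c \<cdot>\<^sub>m A i) = mm_zero K e"
  unfolding mm_linear_smult[OF assms(1,2)] assms(3)
  by (rule mm_carrier_eqI[OF mm_carrier_smult[OF mm_zero_carrier] mm_zero_carrier])
    (simp add: mm_zero_def)

section \<open>Amplification and complete positivity\<close>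

lemma amplify_index:
  "k \<in> K \<Longrightarrow> r < n * e k \<Longrightarrow> s < n * e k \<Longrightarrow> amplify n I d K e \<Phi> X k $$ (r, s)
   = \<Phi> (\<lambda>i. if i \<in> I then blk (d i) (X i) (r div e k) (s div e k) else 0\<^sub>m 0 0) k $$ (r mod e k, s mod e k)"
  by (simp add: amplify_def assemble_def)

lemma amplify_carrier: "amplify n I d K e \<Phi> X \<in> mm_carrier K (\<lambda>k. n * e k)"
  unfolding mm_carrier_def amplify_def assemble_def by auto

lemma blocks_carrier: "(\<lambda>i. if i \<in> I then blk (d i) (X i) p q else 0\<^sub>m 0 0) \<in> mm_carrier I d"
  unfolding mm_carrier_def blk_def by auto

lemma assemble_cong:
  "(\<And>p q. p < n \<Longrightarrow> q < n \<Longrightarrow> F p q = G p q) \<Longrightarrow> assemble n m F = assemble n m G"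
  unfolding assemble_def by (intro eq_matI) (auto simp: less_mult_imp_div_less)

lemma blk_assemble:
  assumes "p < n" "q < n" "F p q \<in> carrier_mat m m"
  shows "blk m (assemble n m F) p q = F p q"
proof (rule eq_matI)
  fix a b assume "a < dim_row (F p q)" "b < dim_col (F p q)"
  then have "a < m" "b < m"
    using assms(3) by auto
  then show "blk m (assemble n m F) p q $$ (a, b) = F p q $$ (a, b)"
    using mult_add_less_mult[OF \<open>a < m\<close> \<open>p < n\<close>] mult_add_less_mult[OF \<open>b < m\<close> \<open>q < n\<close>]
    by (simp add: blk_def assemble_def)
qed (use assms(3) in \<open>auto simp: blk_def\<close>)

lemma amplify_comp:
  assumes "mm_linear I d M f \<Psi>"
  shows "amplify n I d K e (\<Phi> \<circ> \<Psi>) X = amplify n M f K e \<Phi> (amplify n I d M f \<Psi> X)"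
proof -
  have blocks: "(\<lambda>m. if m \<in> M then blk (f m) (amplify n I d M f \<Psi> X m) p q else 0\<^sub>m 0 0)
      = \<Psi> (\<lambda>i. if i \<in> I then blk (d i) (X i) p q else 0\<^sub>m 0 0)" if "p < n" "q < n" for p q
  proof
    fix m
    have "\<Psi> (\<lambda>i. if i \<in> I then blk (d i) (X i) p q else 0\<^sub>m 0 0) \<in> mm_carrier M f"
      by (rule mm_linear_carrier[OF assms blocks_carrier])
    then show "(if m \<in> M then blk (f m) (amplify n I d M f \<Psi> X m) p q else 0\<^sub>m 0 0)
        = \<Psi> (\<lambda>i. if i \<in> I then blk (d i) (X i) p q else 0\<^sub>m 0 0) m"
      using that unfolding mm_carrier_def by (auto simp: amplify_def blk_assemble)
  qed
  show ?thesis
  proof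
    fix k
    show "amplify n I d K e (\<Phi> \<circ> \<Psi>) X k = amplify n M f K e \<Phi> (amplify n I d M f \<Psi> X) k"
    proof (cases "k \<in> K")
      case True
      have "amplify n I d K e (\<Phi> \<circ> \<Psi>) X k
          = assemble n (e k) (\<lambda>p q. \<Phi> (\<Psi> (\<lambda>i. if i \<in> I then blk (d i) (X i) p q else 0\<^sub>m 0 0)) k)"
        using True by (simp add: amplify_def)
      also have "\<dots> = assemble n (e k) (\<lambda>p q.
          \<Phi> (\<lambda>m. if m \<in> M then blk (f m) (amplify n I d M f \<Psi> X m) p q else 0\<^sub>m 0 0) k)"
        by (rule assemble_cong) (simp add: blocks)
      also have "\<dots> = amplify n M f K e \<Phi> (amplify n I d M f \<Psi> X) k"
        using True by (simp add: amplify_def[of n M f K e])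
      finally show ?thesis .
    qed (simp add: amplify_def)
  qed
qed

lemma mm_cp_comp:
  assumes \<Psi>: "mm_cp I d M f \<Psi>" and \<Phi>: "mm_cp M f K e \<Phi>"
  shows "mm_cp I d K e (\<Phi> \<circ> \<Psi>)"
  unfolding mm_cp_def
proof (intro conjI allI impI)
  show "mm_linear I d K e (\<Phi> \<circ> \<Psi>)"
    using \<Psi> \<Phi> unfolding mm_cp_def by (blast intro: mm_linear_comp)
  fix n :: nat and X assume "0 < n" "mm_pos I (\<lambda>i. n * d i) X"
  then have "mm_pos M (\<lambda>m. n * f m) (amplify n I d M f \<Psi> X)"
    using \<Psi> unfolding mm_cp_def by blast
  then have "mm_pos K (\<lambda>k. n * e k) (amplify n M f K e \<Phi> (amplify n I d M f \<Psi> X))"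
    using \<Phi> \<open>0 < n\<close> unfolding mm_cp_def by blast
  moreover have "mm_linear I d M f \<Psi>"
    using \<Psi> unfolding mm_cp_def by blast
  ultimately show "mm_pos K (\<lambda>k. n * e k) (amplify n I d K e (\<Phi> \<circ> \<Psi>) X)"
    by (simp add: amplify_comp)
qed

lemma amplify_one:
  assumes "mm_linear I d K e \<Phi>" "X \<in> mm_carrier I d"
  shows "amplify 1 I d K e \<Phi> X = \<Phi> X"
proof -
  have blocks: "(\<lambda>i. if i \<in> I then blk (d i) (X i) 0 0 else 0\<^sub>m 0 0) = X"
  proof
    fix i show "(if i \<in> I then blk (d i) (X i) 0 0 else 0\<^sub>m 0 0) = X i"
    proof (cases "i \<in> I")
      case True
      then have "X i \<in> carrier_mat (d i) (d i)"
        using assms(2) unfolding mm_carrier_def by auto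
      with True show ?thesis
        unfolding blk_def by (intro eq_matI) auto
    qed (use assms(2) in \<open>simp add: mm_carrier_def\<close>)
  qed
  show ?thesis
  proof (rule mm_carrier_eqI)
    show "amplify 1 I d K e \<Phi> X \<in> mm_carrier K e"
      using amplify_carrier[where n=1] by simp
    show "\<Phi> X \<in> mm_carrier K e"
      by (rule mm_linear_carrier[OF assms])
    fix k r s assume "k \<in> K" "r < e k" "s < e k"
    moreover have "r div e k = 0" "s div e k = 0"
      using \<open>r < e k\<close> \<open>s < e k\<close> by simp_all
    ultimately show "amplify 1 I d K e \<Phi> X k $$ (r, s) = \<Phi> X k $$ (r, s)"
      using amplify_index[of k K r 1 e s I d \<Phi> X] by (simp add: blocks cong: if_cong)
  qed
qed

lemma mm_cp_pos:
  assumes cp: "mm_cp I d K e \<Phi>" and X: "mm_pos I d X"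
  shows "mm_pos K e (\<Phi> X)"
proof -
  have amp: "\<forall>n>0. \<forall>X. mm_pos I (\<lambda>i. n * d i) X \<longrightarrow> mm_pos K (\<lambda>k. n * e k) (amplify n I d K e \<Phi> X)"
    using cp unfolding mm_cp_def by (rule conjunct2)
  have "mm_pos K (\<lambda>k. 1 * e k) (amplify 1 I d K e \<Phi> X)"
    by (rule amp[rule_format]) (simp_all add: X)
  moreover have "amplify 1 I d K e \<Phi> X = \<Phi> X"
    using cp X unfolding mm_cp_def mm_pos_def by (intro amplify_one) simp_all
  ultimately show ?thesis
    by simp
qed

section \<open>Partial trace\<close>

lemma tr_out_index:
  "i \<in> I \<Longrightarrow> b < d i \<Longrightarrow> b' < d i \<Longrightarrow>
   tr_out I d J e X i $$ (b, b') = (\<Sum>j\<in>J. \<Sum>a<e j. X (j, i) $$ (a * d i + b, a * d i + b'))"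
  by (simp add: tr_out_def)

lemma tr_out_carrier: "tr_out I d J e X \<in> mm_carrier I d"
  unfolding mm_carrier_def tr_out_def by auto

lemma tr_out_block_carrier: "i \<in> I \<Longrightarrow> tr_out I d J e X i \<in> carrier_mat (d i) (d i)"
  unfolding tr_out_def by auto

lemma mm_linear_tr_out: "mm_linear (J \<times> I) (hom_dim d e) I d (tr_out I d J e)"
  unfolding mm_linear_def
proof (intro conjI ballI allI tr_out_carrier)
  fix X Y assume X: "X \<in> mm_carrier (J \<times> I) (hom_dim d e)" and Y: "Y \<in> mm_carrier (J \<times> I) (hom_dim d e)"
  fix c :: complex
  have entry_add: "(X (j, i) + Y (j, i)) $$ (a * d i + b, a * d i + b')
        = X (j, i) $$ (a * d i + b, a * d i + b') + Y (j, i) $$ (a * d i + b, a * d i + b')"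
    and entry_smult: "(c \<cdot>\<^sub>m X (j, i)) $$ (a * d i + b, a * d i + b') = c * X (j, i) $$ (a * d i + b, a * d i + b')"
    if "i \<in> I" "j \<in> J" "a < e j" "b < d i" "b' < d i" for i j a b b'
    using mm_carrier_hom_block[OF X that(2,1)] mm_carrier_hom_block[OF Y that(2,1)]
      mult_add_less_mult[OF that(4,3)] mult_add_less_mult[OF that(5,3)] by auto
  show "tr_out I d J e (\<lambda>ji. X ji + Y ji) = (\<lambda>i. tr_out I d J e X i + tr_out I d J e Y i)"
  proof (rule mm_carrier_eqI[OF tr_out_carrier mm_carrier_add[OF tr_out_carrier tr_out_carrier]])
    fix i r s assume rs: "i \<in> I" "r < d i" "s < d i"
    have "tr_out I d J e (\<lambda>ji. X ji + Y ji) i $$ (r, s)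
        = (\<Sum>j\<in>J. \<Sum>a<e j. X (j, i) $$ (a * d i + r, a * d i + s) + Y (j, i) $$ (a * d i + r, a * d i + s))"
      using rs by (simp add: tr_out_index entry_add)
    also have "\<dots> = (tr_out I d J e X i + tr_out I d J e Y i) $$ (r, s)"
      using rs carrier_matD[OF tr_out_block_carrier[of i I d J e Y]] by (simp add: tr_out_index sum.distrib)
    finally show "tr_out I d J e (\<lambda>ji. X ji + Y ji) i $$ (r, s) = (tr_out I d J e X i + tr_out I d J e Y i) $$ (r, s)" .
  qed
  show "tr_out I d J e (\<lambda>ji. c \<cdot>\<^sub>m X ji) = (\<lambda>i. c \<cdot>\<^sub>m tr_out I d J e X i)"
  proof (rule mm_carrier_eqI[OF tr_out_carrier mm_carrier_smult[OF tr_out_carrier]])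
    fix i r s assume rs: "i \<in> I" "r < d i" "s < d i"
    have "tr_out I d J e (\<lambda>ji. c \<cdot>\<^sub>m X ji) i $$ (r, s) = (\<Sum>j\<in>J. \<Sum>a<e j. c * X (j, i) $$ (a * d i + r, a * d i + s))"
      using rs by (simp add: tr_out_index entry_smult)
    also have "\<dots> = (c \<cdot>\<^sub>m tr_out I d J e X i) $$ (r, s)"
      using rs carrier_matD[OF tr_out_block_carrier[of i I d J e X]] by (simp add: tr_out_index sum_distrib_left)
    finally show "tr_out I d J e (\<lambda>ji. c \<cdot>\<^sub>m X ji) i $$ (r, s) = (c \<cdot>\<^sub>m tr_out I d J e X i) $$ (r, s)" .
  qed
qed

lemma amplify_tr_out_index:
  assumes i: "i \<in> I" and r: "r < n * d i" and s: "s < n * d i"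
  shows "amplify n (J \<times> I) (hom_dim d e) I d (tr_out I d J e) Y i $$ (r, s)
    = (\<Sum>j\<in>J. \<Sum>a<e j. Y (j, i) $$ ((r div d i) * (e j * d i) + a * d i + r mod d i,
                                  (s div d i) * (e j * d i) + a * d i + s mod d i))"
proof -
  have "0 < d i"
    using r by (cases "d i") auto
  then have bound: "a * d i + t mod d i < e j * d i" if "a < e j" for a j t
    using mult_add_less_mult[OF _ that] by simp
  have "amplify n (J \<times> I) (hom_dim d e) I d (tr_out I d J e) Y i $$ (r, s)
      = (\<Sum>j\<in>J. \<Sum>a<e j. blk (e j * d i) (Y (j, i)) (r div d i) (s div d i)
                               $$ (a * d i + r mod d i, a * d i + s mod d i))"
    using i r s \<open>0 < d i\<close> by (simp add: amplify_index tr_out_index)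
  also have "\<dots> = (\<Sum>j\<in>J. \<Sum>a<e j. Y (j, i) $$ ((r div d i) * (e j * d i) + a * d i + r mod d i,
                                  (s div d i) * (e j * d i) + a * d i + s mod d i))"
    by (intro sum.cong refl) (simp add: blk_def bound add.assoc)
  finally show ?thesis .
qed

lemma psd_amplify_tr_out:
  assumes J: "finite J" and Y: "mm_pos (J \<times> I) (\<lambda>ji. n * hom_dim d e ji) Y" and i: "i \<in> I"
  shows "psd_mat (n * d i) (amplify n (J \<times> I) (hom_dim d e) I d (tr_out I d J e) Y i)"
proof (rule psd_mat_kraus_sum[where A = "Sigma J (\<lambda>j. {..<e j})" and w = "\<lambda>_ _. 1"
    and M = "\<lambda>ja. Y (fst ja, i)" and n = "\<lambda>ja. n * (e (fst ja) * d i)"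
    and f = "\<lambda>ja r. (r div d i) * (e (fst ja) * d i) + snd ja * d i + r mod d i"])
  show "finite (Sigma J (\<lambda>j. {..<e j}))"
    using J by auto
  show "amplify n (J \<times> I) (hom_dim d e) I d (tr_out I d J e) Y i \<in> carrier_mat (n * d i) (n * d i)"
    using mm_carrier_block[OF amplify_carrier i] .
  fix r s assume "r < n * d i" "s < n * d i"
  then show "amplify n (J \<times> I) (hom_dim d e) I d (tr_out I d J e) Y i $$ (r, s)
      = (\<Sum>ja\<in>Sigma J (\<lambda>j. {..<e j}). cnj 1 * Y (fst ja, i) $$
          ((r div d i) * (e (fst ja) * d i) + snd ja * d i + r mod d i,
           (s div d i) * (e (fst ja) * d i) + snd ja * d i + s mod d i) * 1)"
    using J i by (simp add: amplify_tr_out_index sum.Sigma split_def)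
next
  fix ja assume "ja \<in> Sigma J (\<lambda>j. {..<e j})"
  then show "psd_mat (n * (e (fst ja) * d i)) (Y (fst ja, i))"
    using mm_pos_block[OF Y, of "(fst ja, i)"] i by auto
next
  fix ja r assume "ja \<in> Sigma J (\<lambda>j. {..<e j})" "r < n * d i"
  then have "snd ja < e (fst ja)" "0 < d i"
    by (auto intro!: Nat.gr0I)
  then have "(r div d i) * (e (fst ja) * d i) + (snd ja * d i + r mod d i) < n * (e (fst ja) * d i)"
    using \<open>r < n * d i\<close>
    by (intro mult_add_less_mult mult_add_less_mult) (simp_all add: less_mult_imp_div_less)
  then show "(r div d i) * (e (fst ja) * d i) + snd ja * d i + r mod d i < n * (e (fst ja) * d i)"
    by (simp add: add.assoc)
qed

lemma mm_cp_tr_out: "finite J \<Longrightarrow> mm_cp (J \<times> I) (hom_dim d e) I d (tr_out I d J e)"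
  unfolding mm_cp_def mm_pos_def[of I]
  by (auto intro: mm_linear_tr_out amplify_carrier psd_amplify_tr_out)

lemma is_TP_add_traceless:
  assumes P: "P \<in> mm_carrier (J \<times> I) (hom_dim d e)" and H: "H \<in> mm_carrier (J \<times> I) (hom_dim d e)"
    and "is_TP I d J e P" and "tr_out I d J e H = mm_zero I d"
  shows "is_TP I d J e (\<lambda>ji. P ji + c \<cdot>\<^sub>m H ji)"
proof -
  have "tr_out I d J e (\<lambda>ji. P ji + c \<cdot>\<^sub>m H ji) = (\<lambda>i. mm_one I d i + c \<cdot>\<^sub>m mm_zero I d i)"
    using assms(3,4)
    by (simp add: mm_linear_add[OF mm_linear_tr_out P mm_carrier_smult[OF H]] mm_linear_smult[OF mm_linear_tr_out H]
        is_TP_def)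
  also have "\<dots> = mm_one I d"
    by (rule mm_carrier_eqI[OF mm_carrier_add[OF mm_one_carrier mm_carrier_smult[OF mm_zero_carrier]] mm_one_carrier])
      (simp add: mm_one_def mm_zero_def)
  finally show ?thesis
    unfolding is_TP_def .
qed

lemma tr_out_mm_adjoint:
  "tr_out I d J e (mm_adjoint (J \<times> I) (hom_dim d e) Y) = mm_adjoint I d (tr_out I d J e Y)"
proof (rule mm_carrier_eqI[OF tr_out_carrier mm_adjoint_carrier])
  fix i b b' assume i: "i \<in> I" and b: "b < d i" "b' < d i"
  then show "tr_out I d J e (mm_adjoint (J \<times> I) (hom_dim d e) Y) i $$ (b, b')
      = mm_adjoint I d (tr_out I d J e Y) i $$ (b, b')"
    using mult_add_less_mult[OF b(1)] mult_add_less_mult[OF b(2)]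
    by (simp add: tr_out_index mm_adjoint_def cnj_sum)
qed

lemma tr_out_mm_re_im_part:
  assumes Y: "Y \<in> mm_carrier (J \<times> I) (hom_dim d e)" and tr0: "tr_out I d J e Y = mm_zero I d"
  shows "tr_out I d J e (mm_re_part (J \<times> I) (hom_dim d e) Y) = mm_zero I d"
    and "tr_out I d J e (mm_im_part (J \<times> I) (hom_dim d e) Y) = mm_zero I d"
proof -
  let ?Ya = "mm_adjoint (J \<times> I) (hom_dim d e) Y"
  note lin = mm_linear_tr_out[of J I d e]
  have Ya: "?Ya \<in> mm_carrier (J \<times> I) (hom_dim d e)"
    by (rule mm_adjoint_carrier)
  have tr0a: "tr_out I d J e ?Ya = mm_zero I d"
    unfolding tr_out_mm_adjoint tr0
    by (rule mm_carrier_eqI[OF mm_adjoint_carrier mm_zero_carrier]) (simp add: mm_adjoint_def mm_zero_def)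
  have "tr_out I d J e (\<lambda>ji. Y ji + ?Ya ji) = mm_zero I d"
    using tr0 tr0a by (rule mm_linear_zero_add[OF lin Y Ya])
  then show "tr_out I d J e (mm_re_part (J \<times> I) (hom_dim d e) Y) = mm_zero I d"
    unfolding mm_re_part_def by (rule mm_linear_zero_smult[OF lin mm_carrier_add[OF Y Ya]])
  have "tr_out I d J e (\<lambda>ji. (-1) \<cdot>\<^sub>m ?Ya ji) = mm_zero I d"
    using tr0a by (rule mm_linear_zero_smult[OF lin Ya])
  with tr0 have "tr_out I d J e (\<lambda>ji. Y ji + (-1) \<cdot>\<^sub>m ?Ya ji) = mm_zero I d"
    by (rule mm_linear_zero_add[OF lin Y mm_carrier_smult[OF Ya]])
  then show "tr_out I d J e (mm_im_part (J \<times> I) (hom_dim d e) Y) = mm_zero I d"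
    unfolding mm_im_part_def by (rule mm_linear_zero_smult[OF lin mm_carrier_add[OF Y mm_carrier_smult[OF Ya]]])
qed

section \<open>Embedding with the maximally mixed output\<close>

text \<open>\<open>X \<mapsto> 1\<^sub>B / dim B \<otimes> X\<close>; in block \<open>(j, i)\<close> the output index is
  \<open>r div d i\<close> and the input index is \<open>r mod d i\<close>.\<close>
definition embed_mixed :: "'i set \<Rightarrow> ('i \<Rightarrow> nat) \<Rightarrow> 'j set \<Rightarrow> ('j \<Rightarrow> nat)
    \<Rightarrow> ('i \<Rightarrow> complex mat) \<Rightarrow> ('j \<times> 'i \<Rightarrow> complex mat)" where
  "embed_mixed I d J e X = (\<lambda>ji. if ji \<in> J \<times> I then
      mat (hom_dim d e ji) (hom_dim d e ji) (\<lambda>(r, s). if r div d (snd ji) = s div d (snd ji)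
        then X (snd ji) $$ (r mod d (snd ji), s mod d (snd ji)) / of_nat (\<Sum>j\<in>J. e j) else 0)
    else 0\<^sub>m 0 0)"

lemma embed_mixed_index:
  "j \<in> J \<Longrightarrow> i \<in> I \<Longrightarrow> r < e j * d i \<Longrightarrow> s < e j * d i \<Longrightarrow> embed_mixed I d J e X (j, i) $$ (r, s)
   = (if r div d i = s div d i then X i $$ (r mod d i, s mod d i) / of_nat (\<Sum>j\<in>J. e j) else 0)"
  by (simp add: embed_mixed_def)

lemma embed_mixed_carrier: "embed_mixed I d J e X \<in> mm_carrier (J \<times> I) (hom_dim d e)"
  unfolding mm_carrier_def embed_mixed_def by auto

lemma mm_linear_embed_mixed: "mm_linear I d (J \<times> I) (hom_dim d e) (embed_mixed I d J e)"
  unfolding mm_linear_def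
proof (intro conjI ballI allI embed_mixed_carrier)
  fix X Y assume X: "X \<in> mm_carrier I d" and Y: "Y \<in> mm_carrier I d"
  fix c :: complex
  have mod_less: "r mod d i < d i" if "r < e j * d i" for r i j
    using that by (cases "d i") auto
  show "embed_mixed I d J e (\<lambda>i. X i + Y i) = (\<lambda>ji. embed_mixed I d J e X ji + embed_mixed I d J e Y ji)"
  proof (rule mm_carrier_eqI[OF embed_mixed_carrier mm_carrier_add[OF embed_mixed_carrier embed_mixed_carrier]])
    fix ji r s assume "ji \<in> J \<times> I" "r < hom_dim d e ji" "s < hom_dim d e ji"
    then obtain j i where "ji = (j, i)" "j \<in> J" "i \<in> I" "r < e j * d i" "s < e j * d i"
      by auto
    then show "embed_mixed I d J e (\<lambda>i. X i + Y i) ji $$ (r, s)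
        = (embed_mixed I d J e X ji + embed_mixed I d J e Y ji) $$ (r, s)"
      using mm_carrier_block[OF X \<open>i \<in> I\<close>] mm_carrier_block[OF Y \<open>i \<in> I\<close>] mod_less
      by (simp add: embed_mixed_index add_divide_distrib carrier_matD[OF mm_carrier_block[OF embed_mixed_carrier]])
  qed
  show "embed_mixed I d J e (\<lambda>i. c \<cdot>\<^sub>m X i) = (\<lambda>ji. c \<cdot>\<^sub>m embed_mixed I d J e X ji)"
  proof (rule mm_carrier_eqI[OF embed_mixed_carrier mm_carrier_smult[OF embed_mixed_carrier]])
    fix ji r s assume "ji \<in> J \<times> I" "r < hom_dim d e ji" "s < hom_dim d e ji"
    then obtain j i where "ji = (j, i)" "j \<in> J" "i \<in> I" "r < e j * d i" "s < e j * d i"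
      by auto
    then show "embed_mixed I d J e (\<lambda>i. c \<cdot>\<^sub>m X i) ji $$ (r, s) = (c \<cdot>\<^sub>m embed_mixed I d J e X ji) $$ (r, s)"
      using mm_carrier_block[OF X \<open>i \<in> I\<close>] mod_less
      by (simp add: embed_mixed_index carrier_matD[OF mm_carrier_block[OF embed_mixed_carrier]])
  qed
qed

lemma tr_out_embed_mixed:
  assumes J: "valid_mm J e" and X: "X \<in> mm_carrier I d"
  shows "tr_out I d J e (embed_mixed I d J e X) = X"
proof (rule mm_carrier_eqI[OF tr_out_carrier X])
  fix i b b' assume i: "i \<in> I" and b: "b < d i" "b' < d i"
  define D where "D = (\<Sum>j\<in>J. e j)"
  have "D > 0"
    using J unfolding D_def valid_mm_def by (intro sum_pos) auto
  have "tr_out I d J e (embed_mixed I d J e X) i $$ (b, b') = (\<Sum>j\<in>J. \<Sum>a<e j. X i $$ (b, b') / of_nat D)"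
    using i b mult_add_less_mult[OF b(1)] mult_add_less_mult[OF b(2)]
    by (simp add: tr_out_index embed_mixed_index D_def)
  also have "\<dots> = of_nat D * (X i $$ (b, b') / of_nat D)"
    unfolding D_def by (simp add: sum_distrib_right sum_divide_distrib)
  also have "\<dots> = X i $$ (b, b')"
    using \<open>D > 0\<close> by simp
  finally show "tr_out I d J e (embed_mixed I d J e X) i $$ (b, b') = X i $$ (b, b')" .
qed

lemma amplify_embed_mixed_index:
  assumes ji: "j \<in> J" "i \<in> I" and r: "r < n * (e j * d i)" and s: "s < n * (e j * d i)"
  shows "amplify n I d (J \<times> I) (hom_dim d e) (embed_mixed I d J e) X (j, i) $$ (r, s)
    = (if (r mod (e j * d i)) div d i = (s mod (e j * d i)) div d i
       then X i $$ ((r div (e j * d i)) * d i + r mod d i, (s div (e j * d i)) * d i + s mod d i)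
              / of_nat (\<Sum>j\<in>J. e j)
       else 0)"
proof -
  let ?m = "e j * d i"
  have "0 < ?m"
    using r by (cases ?m) auto
  then have "0 < d i"
    by simp
  have mod_m: "t mod ?m < ?m" for t
    using \<open>0 < ?m\<close> by simp
  have mod_mod: "t mod ?m mod d i = t mod d i" for t
    by (simp add: mod_mod_cancel)
  have "amplify n I d (J \<times> I) (hom_dim d e) (embed_mixed I d J e) X (j, i) $$ (r, s)
      = embed_mixed I d J e (\<lambda>i. if i \<in> I then blk (d i) (X i) (r div ?m) (s div ?m) else 0\<^sub>m 0 0) (j, i)
          $$ (r mod ?m, s mod ?m)"
    using ji r s by (simp add: amplify_index cong: if_cong)
  also have "\<dots> = (if (r mod ?m) div d i = (s mod ?m) div d i
       then blk (d i) (X i) (r div ?m) (s div ?m) $$ (r mod ?m mod d i, s mod ?m mod d i) / of_nat (\<Sum>j\<in>J. e j)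
       else 0)"
    using ji by (simp add: embed_mixed_index mod_m)
  also have "\<dots> = (if (r mod ?m) div d i = (s mod ?m) div d i
       then X i $$ ((r div ?m) * d i + r mod d i, (s div ?m) * d i + s mod d i) / of_nat (\<Sum>j\<in>J. e j)
       else 0)"
    using \<open>0 < d i\<close> by (simp add: blk_def mod_mod cong: if_cong)
  finally show ?thesis .
qed

lemma cnj_inv_sqrt_mult:
  "cnj (complex_of_real (1 / sqrt (real D))) * complex_of_real (1 / sqrt (real D)) * z = z / of_nat D"
proof -
  have "(1 / sqrt (real D)) * (1 / sqrt (real D)) = 1 / real D"
    by (simp flip: power2_eq_square add: power_divide)
  then have "cnj (complex_of_real (1 / sqrt (real D))) * complex_of_real (1 / sqrt (real D)) = 1 / of_nat D"
    by (metis Reals_cnj_iff Reals_of_real of_real_divide of_real_mult of_real_of_nat_eq of_real_1)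
  then show ?thesis
    by simp
qed

lemma psd_amplify_embed_mixed:
  assumes X: "mm_pos I (\<lambda>i. n * d i) X" and ji: "j \<in> J" "i \<in> I"
  shows "psd_mat (n * (e j * d i)) (amplify n I d (J \<times> I) (hom_dim d e) (embed_mixed I d J e) X (j, i))"
proof -
  let ?m = "e j * d i"
  let ?A = "amplify n I d (J \<times> I) (hom_dim d e) (embed_mixed I d J e) X (j, i)"
  define D where "D = (\<Sum>j\<in>J. e j)"
  define c where "c = complex_of_real (1 / sqrt (real D))"
  have c: "cnj c * c * z = z / of_nat D" for z
    unfolding c_def by (rule cnj_inv_sqrt_mult)
  define w where "w a r = (if (r mod ?m) div d i = a then c else 0)" for a r
  define f where "f r = (r div ?m) * d i + r mod d i" for r
  show ?thesis
  proof (rule psd_mat_kraus_sum[where A = "{..<e j}" and w = w and M = "\<lambda>_. X i"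
        and f = "\<lambda>_. f" and n = "\<lambda>_. n * d i"])
    show "?A \<in> carrier_mat (n * ?m) (n * ?m)"
      using mm_carrier_block[OF amplify_carrier[of n I d "J \<times> I" "hom_dim d e" "embed_mixed I d J e" X], of "(j, i)"] ji
      by simp
    fix r s assume r: "r < n * ?m" and s: "s < n * ?m"
    have "0 < ?m"
      using r by (cases ?m) auto
    then have "(r mod ?m) div d i < e j"
      by (intro less_mult_imp_div_less) simp
    then have "(\<Sum>a<e j. cnj (w a r) * X i $$ (f r, f s) * w a s)
        = (if (r mod ?m) div d i = (s mod ?m) div d i then cnj c * c * X i $$ (f r, f s) else 0)"
      unfolding w_def by (simp add: if_distrib mult_ac cong: if_cong)
    then show "?A $$ (r, s) = (\<Sum>a<e j. cnj (w a r) * X i $$ (f r, f s) * w a s)"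
      using amplify_embed_mixed_index[of j J i I r n e d s X] ji r s by (simp add: c f_def D_def)
  next
    show "psd_mat (n * d i) (X i)"
      by (rule mm_pos_block[OF X ji(2)])
  next
    fix r assume "r < n * ?m"
    then have "r div ?m < n" "0 < d i"
      by (auto simp: less_mult_imp_div_less intro!: Nat.gr0I)
    then show "f r < n * d i"
      unfolding f_def by (intro mult_add_less_mult) simp_all
  qed simp
qed

lemma mm_cp_embed_mixed: "mm_cp I d (J \<times> I) (hom_dim d e) (embed_mixed I d J e)"
  unfolding mm_cp_def mm_pos_def[of "J \<times> I"]
  by (auto intro: mm_linear_embed_mixed amplify_carrier psd_amplify_embed_mixed)

lemma embed_mixed_one_index:
  assumes "j \<in> J" "i \<in> I" "r < e j * d i" "s < e j * d i"
  shows "embed_mixed I d J e (mm_one I d) (j, i) $$ (r, s) = (if r = s then 1 / of_nat (\<Sum>j\<in>J. e j) else 0)"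
proof -
  have "0 < d i"
    using assms(3) by (cases "d i") auto
  moreover have "r div d i = s div d i \<and> r mod d i = s mod d i \<longleftrightarrow> r = s"
    by (metis div_mult_mod_eq)
  ultimately show ?thesis
    using assms by (auto simp: embed_mixed_index mm_one_def)
qed

lemma mm_pos_embed_mixed_one: "mm_pos (J \<times> I) (hom_dim d e) (embed_mixed I d J e (mm_one I d))"
  by (rule mm_cp_pos[OF mm_cp_embed_mixed mm_one_pos])

lemma is_TP_embed_mixed_one: "valid_mm J e \<Longrightarrow> is_TP I d J e (embed_mixed I d J e (mm_one I d))"
  unfolding is_TP_def by (rule tr_out_embed_mixed[OF _ mm_one_carrier])

lemma psd_embed_mixed_one_plus_hermitian:
  assumes ji: "ji \<in> J \<times> I" and H: "H \<in> mm_carrier (J \<times> I) (hom_dim d e)"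
    and herm: "mm_hermitian (J \<times> I) (hom_dim d e) H" and "0 \<le> \<epsilon>"
    and small: "\<epsilon> * (\<Sum>r<hom_dim d e ji. \<Sum>s<hom_dim d e ji. cmod (H ji $$ (r, s))) \<le> 1 / real (\<Sum>j\<in>J. e j)"
  shows "psd_mat (hom_dim d e ji) (embed_mixed I d J e (mm_one I d) ji + complex_of_real \<epsilon> \<cdot>\<^sub>m H ji)"
proof (rule psd_mat_scalar_plus_hermitian[OF _ _ _ \<open>0 \<le> \<epsilon>\<close> small])
  let ?E = "embed_mixed I d J e (mm_one I d)"
  obtain j i where ji': "ji = (j, i)" "j \<in> J" "i \<in> I"
    using ji by auto
  show "?E ji + complex_of_real \<epsilon> \<cdot>\<^sub>m H ji \<in> carrier_mat (hom_dim d e ji) (hom_dim d e ji)"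
    using mm_carrier_block[OF embed_mixed_carrier ji] mm_carrier_block[OF H ji] by simp
  fix r s assume rs: "r < hom_dim d e ji" "s < hom_dim d e ji"
  show "(?E ji + complex_of_real \<epsilon> \<cdot>\<^sub>m H ji) $$ (r, s)
      = (if r = s then complex_of_real (1 / real (\<Sum>j\<in>J. e j)) else 0) + complex_of_real \<epsilon> * H ji $$ (r, s)"
    using mm_carrier_block[OF embed_mixed_carrier ji] mm_carrier_block[OF H ji] rs ji'
    by (simp add: embed_mixed_one_index)
  show "H ji $$ (r, s) = cnj (H ji $$ (s, r))"
    using herm ji rs unfolding mm_hermitian_def by blast
qed

lemma mm_pos_embed_mixed_one_plus_hermitian:
  assumes I: "finite I" and J: "valid_mm J e"
    and H: "H \<in> mm_carrier (J \<times> I) (hom_dim d e)" and herm: "mm_hermitian (J \<times> I) (hom_dim d e) H"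
  obtains \<epsilon> :: real where "0 < \<epsilon>"
    "mm_pos (J \<times> I) (hom_dim d e) (\<lambda>ji. embed_mixed I d J e (mm_one I d) ji + complex_of_real \<epsilon> \<cdot>\<^sub>m H ji)"
proof -
  define D where "D = (\<Sum>j\<in>J. e j)"
  define norm1 where "norm1 ji = (\<Sum>r<hom_dim d e ji. \<Sum>s<hom_dim d e ji. cmod (H ji $$ (r, s)))" for ji
  define M where "M = (\<Sum>ji\<in>J \<times> I. norm1 ji)"
  define \<epsilon> where "\<epsilon> = 1 / real D / (M + 1)"
  have "0 < D"
    using J unfolding D_def valid_mm_def by (intro sum_pos) auto
  have "0 \<le> M"
    unfolding M_def norm1_def by (intro sum_nonneg) auto
  then have "0 < \<epsilon>"
    unfolding \<epsilon>_def using \<open>0 < D\<close> by simp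
  have "mm_pos (J \<times> I) (hom_dim d e) (\<lambda>ji. embed_mixed I d J e (mm_one I d) ji + complex_of_real \<epsilon> \<cdot>\<^sub>m H ji)"
    unfolding mm_pos_def
  proof (intro conjI ballI mm_carrier_add[OF embed_mixed_carrier mm_carrier_smult[OF H]])
    fix ji assume ji: "ji \<in> J \<times> I"
    have "norm1 ji \<le> M"
      unfolding M_def using I J ji
      by (intro member_le_sum) (auto simp: valid_mm_def norm1_def intro!: sum_nonneg)
    then have "\<epsilon> * norm1 ji \<le> \<epsilon> * (M + 1)"
      using \<open>0 < \<epsilon>\<close> by simp
    also have "\<dots> = 1 / real D"
      unfolding \<epsilon>_def using \<open>0 \<le> M\<close> by simp
    finally show "psd_mat (hom_dim d e ji) (embed_mixed I d J e (mm_one I d) ji + complex_of_real \<epsilon> \<cdot>\<^sub>m H ji)"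
      using \<open>0 < \<epsilon>\<close> unfolding norm1_def D_def by (intro psd_embed_mixed_one_plus_hermitian[OF ji H herm]) simp_all
  qed
  with \<open>0 < \<epsilon>\<close> show ?thesis
    by (rule that)
qed

section \<open>Linear maps equal to the unit on channels\<close>

context
  fixes I :: "'i set" and d :: "'i \<Rightarrow> nat" and J :: "'j set" and e :: "'j \<Rightarrow> nat"
    and K :: "'k set" and f :: "'k \<Rightarrow> nat" and T :: "('j \<times> 'i \<Rightarrow> complex mat) \<Rightarrow> 'k \<Rightarrow> complex mat"
  assumes I: "finite I" and J: "valid_mm J e"
    and T: "mm_linear (J \<times> I) (hom_dim d e) K f T"
    and T_TP: "\<And>P. mm_pos (J \<times> I) (hom_dim d e) P \<Longrightarrow> is_TP I d J e P \<Longrightarrow> T P = mm_one K f"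
begin

lemma hermitian_tr_out_zero_in_kernel:
  assumes H: "H \<in> mm_carrier (J \<times> I) (hom_dim d e)" and herm: "mm_hermitian (J \<times> I) (hom_dim d e) H"
    and tr0: "tr_out I d J e H = mm_zero I d"
  shows "T H = mm_zero K f"
proof -
  define E where "E = embed_mixed I d J e (mm_one I d)"
  have E: "E \<in> mm_carrier (J \<times> I) (hom_dim d e)"
    unfolding E_def by (rule embed_mixed_carrier)
  obtain \<epsilon> :: real where "0 < \<epsilon>" and pos: "mm_pos (J \<times> I) (hom_dim d e) (\<lambda>ji. E ji + complex_of_real \<epsilon> \<cdot>\<^sub>m H ji)"
    unfolding E_def using mm_pos_embed_mixed_one_plus_hermitian[OF I J H herm] by blast
  have "is_TP I d J e (\<lambda>ji. E ji + complex_of_real \<epsilon> \<cdot>\<^sub>m H ji)"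
    using is_TP_embed_mixed_one[OF J] tr0 unfolding E_def
    by (rule is_TP_add_traceless[OF embed_mixed_carrier H])
  with pos have "T (\<lambda>ji. E ji + complex_of_real \<epsilon> \<cdot>\<^sub>m H ji) = mm_one K f"
    by (rule T_TP)
  moreover have "T E = mm_one K f"
    unfolding E_def by (intro T_TP mm_pos_embed_mixed_one is_TP_embed_mixed_one J)
  ultimately have eq: "(\<lambda>k. T E k + complex_of_real \<epsilon> \<cdot>\<^sub>m T H k) = T E"
    using mm_linear_add[OF T E mm_carrier_smult[OF H]] mm_linear_smult[OF T H] by simp
  show ?thesis
    by (rule mm_carrier_smult_cancel[OF mm_linear_carrier[OF T E] mm_linear_carrier[OF T H] _ eq])
      (use \<open>0 < \<epsilon>\<close> in simp)
qed

lemma tr_out_zero_in_kernel: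
  assumes Y: "Y \<in> mm_carrier (J \<times> I) (hom_dim d e)" and tr0: "tr_out I d J e Y = mm_zero I d"
  shows "T Y = mm_zero K f"
proof -
  let ?re = "mm_re_part (J \<times> I) (hom_dim d e) Y" and ?im = "mm_im_part (J \<times> I) (hom_dim d e) Y"
  note parts = mm_re_im_part_carrier[OF Y]
  have "T ?re = mm_zero K f"
    using mm_hermitian_re_im_part(1)[OF Y] tr_out_mm_re_im_part(1)[OF Y tr0]
    by (rule hermitian_tr_out_zero_in_kernel[OF parts(1)])
  moreover have "T ?im = mm_zero K f"
    using mm_hermitian_re_im_part(2)[OF Y] tr_out_mm_re_im_part(2)[OF Y tr0]
    by (rule hermitian_tr_out_zero_in_kernel[OF parts(2)])
  then have "T (\<lambda>ji. \<i> \<cdot>\<^sub>m ?im ji) = mm_zero K f"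
    by (rule mm_linear_zero_smult[OF T parts(2)])
  ultimately have "T (\<lambda>ji. ?re ji + \<i> \<cdot>\<^sub>m ?im ji) = mm_zero K f"
    by (rule mm_linear_zero_add[OF T parts(1) mm_carrier_smult[OF parts(2)]])
  then show ?thesis
    unfolding mm_re_plus_im_part[OF Y] .
qed

lemma tr_out_factorization:
  assumes X: "X \<in> mm_carrier (J \<times> I) (hom_dim d e)"
  shows "T X = T (embed_mixed I d J e (tr_out I d J e X))"
proof -
  define Z where "Z = embed_mixed I d J e (tr_out I d J e X)"
  have Z: "Z \<in> mm_carrier (J \<times> I) (hom_dim d e)"
    unfolding Z_def by (rule embed_mixed_carrier)
  have "tr_out I d J e (\<lambda>ji. X ji + (-1) \<cdot>\<^sub>m Z ji) = (\<lambda>i. tr_out I d J e X i + (-1) \<cdot>\<^sub>m tr_out I d J e X i)"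
    unfolding mm_linear_add[OF mm_linear_tr_out X mm_carrier_smult[OF Z]] mm_linear_smult[OF mm_linear_tr_out Z]
    unfolding Z_def tr_out_embed_mixed[OF J tr_out_carrier] ..
  also have "\<dots> = mm_zero I d"
    by (rule mm_carrier_add_neg_self[OF tr_out_carrier])
  finally have "T (\<lambda>ji. X ji + (-1) \<cdot>\<^sub>m Z ji) = mm_zero K f"
    by (rule tr_out_zero_in_kernel[OF mm_carrier_add[OF X mm_carrier_smult[OF Z]]])
  then have "(\<lambda>k. T X k + (-1) \<cdot>\<^sub>m T Z k) = mm_zero K f"
    unfolding mm_linear_add[OF T X mm_carrier_smult[OF Z]] mm_linear_smult[OF T Z] .
  then show ?thesis
    unfolding Z_def[symmetric] by (rule mm_carrier_eq_of_diff[OF mm_linear_carrier[OF T X] mm_linear_carrier[OF T Z]])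
qed

end

theorem lemma3p4:
  fixes I :: "'i set" and J :: "'j set" and K :: "'k set" and L :: "'l set"
    and dI :: "'i \<Rightarrow> nat" and dJ :: "'j \<Rightarrow> nat" and dK :: "'k \<Rightarrow> nat" and dL :: "'l \<Rightarrow> nat"
    and S :: "('j \<times> 'i \<Rightarrow> complex mat) \<Rightarrow> ('l \<times> 'k \<Rightarrow> complex mat)"
  assumes "valid_mm I dI" and "valid_mm J dJ" and "valid_mm K dK" and "valid_mm L dL"
    and "deterministic_supermap I dI J dJ K dK L dL S"
  shows "\<exists>N. mm_cp I dI K dK N \<and> N (mm_one I dI) = mm_one K dK \<and>
           (\<forall>X. mm_pos (J \<times> I) (hom_dim dI dJ) X \<longrightarrow>
                tr_out K dK L dL (S X) = N (tr_out I dI J dJ X))"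
proof -
  have I: "finite I" and J: "valid_mm J dJ" and L: "finite L"
    using assms(1,2,4) by (simp_all add: valid_mm_def)
  have S_cp: "mm_cp (J \<times> I) (hom_dim dI dJ) (L \<times> K) (hom_dim dK dL) S"
    and S_TP: "\<And>P. mm_pos (J \<times> I) (hom_dim dI dJ) P \<Longrightarrow> is_TP I dI J dJ P \<Longrightarrow> is_TP K dK L dL (S P)"
    using assms(5) unfolding deterministic_supermap_def by blast+
  let ?T = "tr_out K dK L dL \<circ> S"
  have T: "mm_linear (J \<times> I) (hom_dim dI dJ) K dK ?T"
    using S_cp unfolding mm_cp_def by (blast intro: mm_linear_comp mm_linear_tr_out)
  have T_TP: "?T P = mm_one K dK" if "mm_pos (J \<times> I) (hom_dim dI dJ) P" "is_TP I dI J dJ P" for P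
    using S_TP[OF that] unfolding is_TP_def by simp
  have "mm_cp I dI K dK (?T \<circ> embed_mixed I dI J dJ)"
    by (rule mm_cp_comp[OF mm_cp_embed_mixed mm_cp_comp[OF S_cp mm_cp_tr_out[OF L]]])
  moreover have "(?T \<circ> embed_mixed I dI J dJ) (mm_one I dI) = mm_one K dK"
    using T_TP[OF mm_pos_embed_mixed_one is_TP_embed_mixed_one[OF J]] by simp
  moreover have "tr_out K dK L dL (S X) = (?T \<circ> embed_mixed I dI J dJ) (tr_out I dI J dJ X)"
    if "mm_pos (J \<times> I) (hom_dim dI dJ) X" for X
    using tr_out_factorization[OF I J T T_TP] that unfolding mm_pos_def by simp
  ultimately show ?thesis
    by blast
qed

end
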